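(* Let $q$ be a prime power, let $b,n\in\mathbb{N}$ with $b<n$, and let $\mathcal S_q=\{\mathbf x\in\mathbb F_q^n:\mathrm{wt}(\mathbf x)\le b\}$. Let $\delta\in(0,(1-q^{-1})/2)$ and $m,m',m'',s\in\mathbb{N}$ with $m>m'\ge m''s$ and $\delta m\in\mathbb N$, and let $\mathcal N(\delta)=\{\mathbf w\in\mathbb F_q^m:\mathrm{wt}(\mathbf w)\le\delta m\}$. Fix a primitive polynomial of degree $s$ over $\mathbb F_q$ with root $\alpha\in\mathbb F_{q^s}$ and the associated map $\phi_s:\mathbb F_q^{m''s\times n}\to\mathbb F_{q^s}^{m''\times n}$. Suppose $\mathbf A=\mathbf G\mathbf A'$, where $\mathbf G\in\mathbb F_q^{m\times m'}$ is a generator matrix of an $[m,m',d]_q$ linear code with $d>2\delta m$, and $\mathbf A'\in\mathbb F_q^{m'\times n}$ is such that some set of $m''s$ rows of $\mathbf A'$ forms a matrix $\mathbf A''$ for which $\phi_s(\mathbf A'')$ is a parity check matrix of an $[n,n-m'',d']_{q^s}$ linear code with $d'>2b$. Then $\mathbf x$ can be exactly recovered from $\mathbf y=\mathbf A\mathbf x+\mathbf w$: there is a map $D:\mathbb F_q^m\to\mathbb F_q^n$ with $D(\mathbf A\mathbf x+\mathbf w)=\mathbf x$ for all $\mathbf x\in\mathcal S_q$ and all $\mathbf w\in\mathcal N(\delta)$.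
   Context: $\mathbb F_q$ is the finite field with $q$ elements; $\mathrm{wt}(\mathbf x)$ is the number of nonzero entries of $\mathbf x$. A primitive polynomial of degree $s$ over $\mathbb F_q$ is a monic irreducible polynomial of degree $s$ having a primitive element $\alpha$ of $\mathbb F_{q^s}$ as a root. For $M=M's$ and $\mathbf C=[c_{ij}]\in\mathbb F_q^{M\times n}$, $\phi_s(\mathbf C)=[c'_{kl}]\in\mathbb F_{q^s}^{M'\times n}$ with $c'_{kl}=\sum_{t=0}^{s-1}c_{(k-1)s+t+1,\,l}\,\alpha^t$. An $[N,K,D]_Q$ linear code is a $K$-dimensional subspace of $\mathbb F_Q^N$ with minimum Hamming distance $D$; a generator matrix is an $N\times K$ matrix of rank $K$ whose column space is the code; a parity check matrix is an $(N-K)\times N$ matrix of rank $N-K$ whose null space is the code. *)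

theory Defs
  imports Main "HOL-Computational_Algebra.Polynomial" "HOL-Library.Function_Algebras" "HOL-Library.Cardinality"
begin

(* Vectors of length N over a field 'a are functions nat => 'a vanishing outside {0..<N};
   matrices are functions nat => nat => 'a (entries outside the index range are ignored).
   Indices are 0-based. *)

definition smult_v :: "'a::field \<Rightarrow> (nat \<Rightarrow> 'a) \<Rightarrow> (nat \<Rightarrow> 'a)" where
  "smult_v c v = (\<lambda>i. c * v i)"

definition vecs :: "nat \<Rightarrow> (nat \<Rightarrow> 'a::zero) set" where
  "vecs N = {x. \<forall>i\<ge>N. x i = 0}"

definition wt :: "nat \<Rightarrow> (nat \<Rightarrow> 'a::zero) \<Rightarrow> nat" where
  "wt N x = card {i. i < N \<and> x i \<noteq> 0}"

definition mat_vec :: "nat \<Rightarrow> nat \<Rightarrow> (nat \<Rightarrow> nat \<Rightarrow> 'a::comm_ring_1) \<Rightarrow> (nat \<Rightarrow> 'a) \<Rightarrow> (nat \<Rightarrow> 'a)" where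
  "mat_vec M K A x = (\<lambda>i. if i < M then (\<Sum>j<K. A i j * x j) else 0)"

definition mat_mult :: "nat \<Rightarrow> (nat \<Rightarrow> nat \<Rightarrow> 'a::comm_ring_1) \<Rightarrow> (nat \<Rightarrow> nat \<Rightarrow> 'a) \<Rightarrow> (nat \<Rightarrow> nat \<Rightarrow> 'a)" where
  "mat_mult K A B = (\<lambda>i j. \<Sum>k<K. A i k * B k j)"

definition col_space :: "nat \<Rightarrow> nat \<Rightarrow> (nat \<Rightarrow> nat \<Rightarrow> 'a::field) \<Rightarrow> (nat \<Rightarrow> 'a) set" where
  "col_space M K A = mat_vec M K A ` vecs K"

definition null_space :: "nat \<Rightarrow> nat \<Rightarrow> (nat \<Rightarrow> nat \<Rightarrow> 'a::field) \<Rightarrow> (nat \<Rightarrow> 'a) set" where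
  "null_space M K A = {x \<in> vecs K. mat_vec M K A x = (\<lambda>_. 0)}"

definition mat_rank :: "nat \<Rightarrow> nat \<Rightarrow> (nat \<Rightarrow> nat \<Rightarrow> 'a::field) \<Rightarrow> nat" where
  "mat_rank M K A = vector_space.dim smult_v (col_space M K A)"

definition lin_code :: "nat \<Rightarrow> nat \<Rightarrow> (nat \<Rightarrow> 'a::field) set \<Rightarrow> bool" where
  "lin_code N K C \<longleftrightarrow> C \<subseteq> vecs N \<and> module.subspace smult_v C \<and> vector_space.dim smult_v C = K"

definition min_dist :: "nat \<Rightarrow> (nat \<Rightarrow> 'a::field) set \<Rightarrow> nat" where
  "min_dist N C = Inf {wt N (x - y) | x y. x \<in> C \<and> y \<in> C \<and> x \<noteq> y}"

definition is_code :: "nat \<Rightarrow> nat \<Rightarrow> nat \<Rightarrow> (nat \<Rightarrow> 'a::field) set \<Rightarrow> bool" where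
  "is_code N K D C \<longleftrightarrow> lin_code N K C \<and> min_dist N C = D"

definition generator_matrix :: "nat \<Rightarrow> nat \<Rightarrow> (nat \<Rightarrow> nat \<Rightarrow> 'a::field) \<Rightarrow> (nat \<Rightarrow> 'a) set \<Rightarrow> bool" where
  "generator_matrix N K G C \<longleftrightarrow> mat_rank N K G = K \<and> col_space N K G = C"

definition parity_check_matrix :: "nat \<Rightarrow> nat \<Rightarrow> (nat \<Rightarrow> nat \<Rightarrow> 'a::field) \<Rightarrow> (nat \<Rightarrow> 'a) set \<Rightarrow> bool" where
  "parity_check_matrix N K H C \<longleftrightarrow> mat_rank (N - K) N H = N - K \<and> null_space (N - K) N H = C"

definition field_embedding :: "('a::field \<Rightarrow> 'b::field) \<Rightarrow> bool" where
  "field_embedding emb \<longleftrightarrow> inj emb \<and> emb 0 = 0 \<and> emb 1 = 1 \<and>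
     (\<forall>x y. emb (x + y) = emb x + emb y) \<and> (\<forall>x y. emb (x * y) = emb x * emb y)"

definition primitive_element :: "'b::field \<Rightarrow> bool" where
  "primitive_element \<alpha> \<longleftrightarrow> \<alpha> \<noteq> 0 \<and> (\<forall>y. y \<noteq> 0 \<longrightarrow> (\<exists>k::nat. \<alpha> ^ k = y))"

definition primitive_poly :: "('a::field \<Rightarrow> 'b::field) \<Rightarrow> nat \<Rightarrow> 'a poly \<Rightarrow> 'b \<Rightarrow> bool" where
  "primitive_poly emb s p \<alpha> \<longleftrightarrow> lead_coeff p = 1 \<and> irreducible p \<and> degree p = s \<and>
     primitive_element \<alpha> \<and> poly (map_poly emb p) \<alpha> = 0"

(* \<phi>_s : F_q^{M's x n} \<rightarrow> F_{q^s}^{M' x n}, 0-based:  c'_{k,l} = \<Sum>_{t<s} c_{k s + t, l} \<alpha>^t *)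
definition phi :: "('a \<Rightarrow> 'b::field) \<Rightarrow> 'b \<Rightarrow> nat \<Rightarrow> (nat \<Rightarrow> nat \<Rightarrow> 'a) \<Rightarrow> (nat \<Rightarrow> nat \<Rightarrow> 'b)" where
  "phi emb \<alpha> s C = (\<lambda>k l. \<Sum>t<s. emb (C (k * s + t) l) * \<alpha> ^ t)"

end

theory Submission imports Defs begin

text \<open>If two encodings agree, \<open>A x + w = A x' + w'\<close>, then \<open>G (A' (x - x'))\<close> is a
codeword of weight at most \<open>2 \<delta> m < d\<close>, hence zero, and since \<open>G\<close> has full column rank,
\<open>A' (x - x') = 0\<close>. In particular the rows of \<open>A''\<close> annihilate \<open>x - x'\<close>; as \<open>\<phi>\<^sub>s\<close> is
linear over the base field, \<open>\<phi>\<^sub>s(A'')\<close> annihilates \<open>x - x'\<close> embedded into the extension field.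
Being a word of weight at most \<open>2b < d'\<close> of the code with that parity check matrix, it is zero.
So the encoding is injective on the admissible pairs \<open>(x, w)\<close>, and any left inverse decodes.\<close>

interpretation vs: vector_space "smult_v :: 'a::field \<Rightarrow> (nat \<Rightarrow> 'a) \<Rightarrow> _"
  by unfold_locales (auto simp: smult_v_def fun_eq_iff algebra_simps)

lemma (in vector_space) independent_if_card_le_dim_span:
  assumes "finite B" and "card B \<le> dim (span B)"
  shows "independent B"
proof -
  obtain A where A: "A \<subseteq> B" "independent A" "B \<subseteq> span A"
    using maximal_independent_subset[of B] by blast
  have "span A = span B"
    using A(1,3) span_mono[of A B] span_mono[of B "span A"] by (auto simp: span_span)
  then have "dim (span B) = card A"
    using A(2) by (metis dim_span_eq_card_independent)
  with assms A(1) have "A = B"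
    by (metis card_mono card_subset_eq dual_order.antisym)
  with A(2) show ?thesis by simp
qed

lemma sum_fun_apply: "sum f A x = (\<Sum>a\<in>A. f a x)"
  by (induct A rule: infinite_finite_induct) auto

definition mat_col :: "nat \<Rightarrow> (nat \<Rightarrow> nat \<Rightarrow> 'a::zero) \<Rightarrow> nat \<Rightarrow> (nat \<Rightarrow> 'a)" where
  "mat_col M A j = (\<lambda>i. if i < M then A i j else 0)"

lemma mat_vec_eq_sum_cols:
  "mat_vec M K A u = (\<Sum>j<K. smult_v (u j) (mat_col M A j))"
  by (auto simp: mat_vec_def mat_col_def smult_v_def fun_eq_iff sum_fun_apply mult.commute
      intro!: sum.cong)

lemma mat_col_in_col_space: "j < K \<Longrightarrow> mat_col M A j \<in> col_space M K A"
proof -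
  assume j: "j < K"
  define e where "e = (\<lambda>i. if i = j then 1 else 0 :: 'a)"
  have "e \<in> vecs K" using j by (auto simp: e_def vecs_def)
  moreover have "mat_vec M K A e = mat_col M A j"
    using j by (auto simp: mat_vec_def mat_col_def e_def fun_eq_iff if_distrib cong: if_cong)
  ultimately show ?thesis unfolding col_space_def by force
qed

lemma col_space_subset_span_cols: "col_space M K A \<subseteq> vs.span (mat_col M A ` {..<K})"
  unfolding col_space_def mat_vec_eq_sum_cols
  by (auto intro!: vs.span_sum vs.span_scale intro: vs.span_base)

lemma dim_col_space: "vs.dim (col_space M K A) = vs.dim (mat_col M A ` {..<K})"
proof (rule vs.span_eq_dim)
  show "vs.span (col_space M K A) = vs.span (mat_col M A ` {..<K})"
    using col_space_subset_span_cols[of M K A] mat_col_in_col_space[of _ K M A]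
    by (metis image_subsetI lessThan_iff subset_antisym vs.span_mono vs.span_span)
qed

lemma mat_vec_eq_0_if_full_rank:
  fixes A :: "nat \<Rightarrow> nat \<Rightarrow> 'a::field"
  assumes rank: "mat_rank M K A = K" and u: "u \<in> vecs K" and Au: "mat_vec M K A u = 0"
  shows "u = 0"
proof -
  define B where "B = mat_col M A ` {..<K}"
  have dimB: "vs.dim B = K" using rank by (simp add: mat_rank_def dim_col_space B_def)
  have "K \<le> card B" using vs.dim_le_card'[of B] dimB by (simp add: B_def)
  moreover have "card B \<le> K" unfolding B_def using card_image_le by fastforce
  ultimately have cardB: "card B = K" by simp
  then have inj: "inj_on (mat_col M A) {..<K}"
    unfolding B_def by (metis card_lessThan eq_card_imp_inj_on finite_lessThan)
  have indep: "vs.independent B"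
    using cardB dimB by (intro vs.independent_if_card_le_dim_span) (simp_all add: B_def)
  define c where "c v = u (the_inv_into {..<K} (mat_col M A) v)" for v
  have "(\<Sum>v\<in>B. smult_v (c v) v) = (\<Sum>j<K. smult_v (u j) (mat_col M A j))"
    unfolding B_def using inj by (simp add: sum.reindex c_def the_inv_into_f_f)
  also have "\<dots> = 0" using Au by (simp add: mat_vec_eq_sum_cols)
  finally have "\<forall>v\<in>B. c v = 0"
    using indep vs.dependent_finite[of B] by (auto simp: B_def)
  then have "\<forall>j<K. u j = 0" using inj by (auto simp: B_def c_def the_inv_into_f_f)
  with u show ?thesis unfolding vecs_def by (auto simp: fun_eq_iff) (metis leI)
qed

lemma mat_vec_in_vecs: "mat_vec M K A x \<in> vecs M"
  by (simp add: mat_vec_def vecs_def)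

lemma mat_vec_diff: "mat_vec M K A (x - y) = mat_vec M K A x - mat_vec M K A y"
  by (auto simp: mat_vec_def fun_eq_iff sum_subtractf right_diff_distrib)

lemma mat_vec_mat_mult: "mat_vec M K (mat_mult L A B) x = mat_vec M L A (mat_vec L K B x)"
proof -
  have "(\<Sum>j<K. (\<Sum>l<L. A i l * B l j) * x j) = (\<Sum>l<L. A i l * (\<Sum>j<K. B l j * x j))" for i
    by (simp add: sum_distrib_left sum_distrib_right mult.assoc sum.swap[of _ "{..<K}"])
  then show ?thesis by (auto simp: mat_vec_def mat_mult_def fun_eq_iff)
qed

lemma wt_diff_le: "wt N (x - y) \<le> wt N x + wt N (y :: nat \<Rightarrow> 'a::ab_group_add)"
proof -
  have "wt N (x - y) \<le> card ({i. i < N \<and> x i \<noteq> 0} \<union> {i. i < N \<and> y i \<noteq> 0})"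
    unfolding wt_def by (intro card_mono) auto
  also have "\<dots> \<le> wt N x + wt N y" unfolding wt_def by (rule card_Un_le)
  finally show ?thesis .
qed

lemma wt_comp_inj: "inj f \<Longrightarrow> f 0 = 0 \<Longrightarrow> wt N (\<lambda>i. f (x i)) = wt N x"
  unfolding wt_def by (metis injD)

lemma code_low_weight_eq_0:
  assumes "x \<in> C" and "0 \<in> C" and "wt N x < min_dist N C"
  shows "x = 0"
proof (rule ccontr)
  assume "x \<noteq> 0"
  with assms(1,2) have "min_dist N C \<le> wt N (x - 0)"
    unfolding min_dist_def by (intro cInf_lower) blast+
  with assms(3) show False by simp
qed

lemma generator_matrix_low_weight_eq_0:
  assumes G: "generator_matrix N K G C" and u: "u \<in> vecs K"
    and wt: "wt N (mat_vec N K G u) < min_dist N C"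
  shows "u = 0"
proof -
  have C: "C = mat_vec N K G ` vecs K"
    using G by (simp add: generator_matrix_def col_space_def)
  have "mat_vec N K G 0 \<in> C"
    unfolding C by (rule imageI) (simp add: vecs_def)
  moreover have "mat_vec N K G 0 = 0" by (simp add: mat_vec_def fun_eq_iff)
  ultimately have "0 \<in> C" by simp
  moreover have "mat_vec N K G u \<in> C"
    unfolding C using u by (rule imageI)
  ultimately have "mat_vec N K G u = 0"
    using code_low_weight_eq_0 wt by blast
  moreover have "mat_rank N K G = K" using G by (simp add: generator_matrix_def)
  ultimately show ?thesis using mat_vec_eq_0_if_full_rank u by blast
qed

lemma parity_check_matrix_low_weight_eq_0:
  assumes H: "parity_check_matrix N K H C" and y: "y \<in> vecs N"
    and Hy: "mat_vec (N - K) N H y = 0" and wt: "wt N y < min_dist N C"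
  shows "y = 0"
proof (rule code_low_weight_eq_0[OF _ _ wt])
  have C: "C = null_space (N - K) N H" using H by (simp add: parity_check_matrix_def)
  show "y \<in> C" using y Hy by (simp add: C null_space_def zero_fun_def)
  show "0 \<in> C" by (simp add: C null_space_def vecs_def mat_vec_def fun_eq_iff)
qed

lemma field_embedding_sum: "field_embedding emb \<Longrightarrow> emb (sum f A) = (\<Sum>a\<in>A. emb (f a))"
  by (induct A rule: infinite_finite_induct) (auto simp: field_embedding_def)

lemma mat_vec_phi:
  assumes emb: "field_embedding emb" and k: "k < M"
  shows "mat_vec M K (phi emb \<alpha> s C) (\<lambda>l. emb (z l)) k =
    (\<Sum>t<s. emb (\<Sum>l<K. C (k * s + t) l * z l) * \<alpha> ^ t)"
proof -
  have "mat_vec M K (phi emb \<alpha> s C) (\<lambda>l. emb (z l)) k =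
      (\<Sum>l<K. \<Sum>t<s. emb (C (k * s + t) l * z l) * \<alpha> ^ t)"
    using emb k
    by (simp add: mat_vec_def phi_def sum_distrib_left sum_distrib_right field_embedding_def mult_ac)
  also have "\<dots> = (\<Sum>t<s. emb (\<Sum>l<K. C (k * s + t) l * z l) * \<alpha> ^ t)"
    by (simp add: sum.swap[of _ "{..<K}"] field_embedding_sum[OF emb] sum_distrib_right)
  finally show ?thesis .
qed

lemma mat_vec_phi_eq_0:
  assumes emb: "field_embedding emb" and M: "M \<le> M'"
    and Cz: "mat_vec (M' * s) K C z = 0"
  shows "mat_vec M K (phi emb \<alpha> s C) (\<lambda>l. emb (z l)) = 0"
proof
  fix k
  have row: "k * s + t < M' * s" if "k < M" "t < s" for t
  proof -
    have "k * s + t < Suc k * s" using that by simp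
    also have "\<dots> \<le> M' * s" using that M by (intro mult_right_mono) auto
    finally show ?thesis .
  qed
  have "(\<Sum>l<K. C (k * s + t) l * z l) = 0" if "k < M" "t < s" for t
    using fun_cong[OF Cz, of "k * s + t"] row[OF that] by (simp add: mat_vec_def)
  moreover have "emb 0 = 0" using emb by (simp add: field_embedding_def)
  ultimately show "mat_vec M K (phi emb \<alpha> s C) (\<lambda>l. emb (z l)) k = 0 k"
    by (cases "k < M") (simp_all add: mat_vec_phi[OF emb], simp add: mat_vec_def)
qed

lemma decoder_exists:
  assumes "\<And>x x' w w'. x \<in> S \<Longrightarrow> x' \<in> S \<Longrightarrow> w \<in> W \<Longrightarrow> w' \<in> W \<Longrightarrow>
      f x + w = f x' + w' \<Longrightarrow> x = x'"
  shows "\<exists>D. \<forall>x\<in>S. \<forall>w\<in>W. D (f x + w) = x"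
proof -
  define D where "D y = (SOME x. x \<in> S \<and> (\<exists>w\<in>W. y = f x + w))" for y
  have "D (f x + w) = x" if "x \<in> S" "w \<in> W" for x w
  proof -
    have "D (f x + w) \<in> S \<and> (\<exists>w'\<in>W. f x + w = f (D (f x + w)) + w')"
      unfolding D_def by (rule someI[of _ x]) (use that in blast)
    with assms that show ?thesis by metis
  qed
  then show ?thesis by blast
qed

lemma concatenated_code_inj:
  fixes G A' :: "nat \<Rightarrow> nat \<Rightarrow> 'a::field" and emb :: "'a \<Rightarrow> 'b::field"
  assumes emb: "field_embedding emb"
    and G: "generator_matrix m m' G C"
    and r: "\<forall>i < m'' * s. r i < m'"
    and H: "parity_check_matrix n (n - m'') (phi emb \<alpha> s (\<lambda>k l. A' (r k) l)) C'"
    and x: "x \<in> vecs n" "x' \<in> vecs n" and wt_x: "wt n (x - x') < min_dist n C'"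
    and wt_w: "wt m (w' - w) < min_dist m C"
    and eq: "mat_vec m n (mat_mult m' G A') x + w = mat_vec m n (mat_mult m' G A') x' + w'"
  shows "x = x'"
proof -
  define z where "z = x - x'"
  define u where "u = mat_vec m' n A' z"
  have "mat_vec m m' G u = w' - w"
    using eq by (simp add: u_def z_def mat_vec_mat_mult[symmetric] mat_vec_diff algebra_simps)
  then have "u = 0"
    using wt_w by (intro generator_matrix_low_weight_eq_0[OF G]) (simp_all add: u_def mat_vec_in_vecs)
  with r have "mat_vec (m'' * s) n (\<lambda>k l. A' (r k) l) z = 0"
    by (auto simp: u_def mat_vec_def fun_eq_iff) metis
  then have "mat_vec (n - (n - m'')) n (phi emb \<alpha> s (\<lambda>k l. A' (r k) l)) (\<lambda>l. emb (z l)) = 0"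
    using mat_vec_phi_eq_0[OF emb, of "n - (n - m'')" m''] by simp
  moreover have "(\<lambda>l. emb (z l)) \<in> vecs n"
    using emb x by (simp add: z_def vecs_def field_embedding_def)
  moreover have "wt n (\<lambda>l. emb (z l)) = wt n z"
    using emb by (intro wt_comp_inj) (simp_all add: field_embedding_def)
  ultimately have "(\<lambda>l. emb (z l)) = 0"
    using parity_check_matrix_low_weight_eq_0[OF H] wt_x by (simp add: z_def)
  then have "emb (z l) = emb 0" for l
    using emb by (simp add: fun_eq_iff field_embedding_def)
  then have "z = 0"
    using emb unfolding field_embedding_def by (metis injD ext zero_fun_def)
  then show "x = x'" by (simp add: z_def)
qed

theorem theorem3:
  fixes emb :: "'a::{finite,field} \<Rightarrow> 'b::{finite,field}"
    and p :: "'a poly" and \<alpha> :: 'b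
    and b n m m' m'' s :: nat and \<delta> :: real
    and G A' :: "nat \<Rightarrow> nat \<Rightarrow> 'a"
  assumes bn: "b < n"
    and delta_pos: "0 < \<delta>" and delta_lt: "\<delta> < (1 - 1 / real CARD('a)) / 2"
    and mm': "m > m'" and m'm'': "m' \<ge> m'' * s"
    and delta_nat: "\<delta> * real m \<in> \<nat>"
    and emb: "field_embedding emb" and card_b: "CARD('b) = CARD('a) ^ s"
    and prim: "primitive_poly emb s p \<alpha>"
    and G: "\<exists>C d. is_code m m' d C \<and> generator_matrix m m' G C \<and> real d > 2 * \<delta> * real m"
    and A'': "\<exists>r :: nat \<Rightarrow> nat. strict_mono_on {..<m'' * s} r \<and> (\<forall>i < m'' * s. r i < m') \<and>
               (\<exists>C' d'. is_code n (n - m'') d' C' \<and>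
                  parity_check_matrix n (n - m'') (phi emb \<alpha> s (\<lambda>k l. A' (r k) l)) C' \<and>
                  d' > 2 * b)"
  shows "\<exists>D :: (nat \<Rightarrow> 'a) \<Rightarrow> (nat \<Rightarrow> 'a).
           \<forall>x \<in> {x \<in> vecs n. wt n x \<le> b}. \<forall>w \<in> {w \<in> vecs m. real (wt m w) \<le> \<delta> * real m}.
             D (mat_vec m n (mat_mult m' G A') x + w) = x"
proof (rule decoder_exists)
  obtain C d where C: "is_code m m' d C" "generator_matrix m m' G C" "real d > 2 * \<delta> * real m"
    using G by blast
  obtain r C' d' where r: "\<forall>i < m'' * s. r i < m'"
    and C': "is_code n (n - m'') d' C'"
      "parity_check_matrix n (n - m'') (phi emb \<alpha> s (\<lambda>k l. A' (r k) l)) C'" "d' > 2 * b"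
    using A'' by blast
  fix x x' w w' :: "nat \<Rightarrow> 'a"
  assume x: "x \<in> {x \<in> vecs n. wt n x \<le> b}" "x' \<in> {x \<in> vecs n. wt n x \<le> b}"
    and w: "w \<in> {w \<in> vecs m. real (wt m w) \<le> \<delta> * real m}"
      "w' \<in> {w \<in> vecs m. real (wt m w) \<le> \<delta> * real m}"
    and eq: "mat_vec m n (mat_mult m' G A') x + w = mat_vec m n (mat_mult m' G A') x' + w'"
  have "wt n (x - x') < min_dist n C'"
    using x C' wt_diff_le[of n x x'] by (auto simp: is_code_def)
  moreover have "real (wt m (w' - w)) < real (min_dist m C)"
    using w C wt_diff_le[of m w' w] by (auto simp: is_code_def)
  ultimately show "x = x'"
    using x by (intro concatenated_code_inj[OF emb C(2) r C'(2) _ _ _ _ eq]) auto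
qed

end
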